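(* Let $A\le B$ be quasi-copulas on $[0,1]^2$ such that $\mathcal{C}(A,B)=\{C: C\text{ copula},\ A\le C\le B\}$ is nonempty. Then: (a) $B=\bigvee\mathcal{C}(A,B)$ (pointwise supremum) if and only if $B(\mathbf{x})-A(\mathbf{x})\le P_O^{(A,B)}(\mathbf{x})$ for all $\mathbf{x}\in[0,1]^2$; (b) $A=\bigwedge\mathcal{C}(A,B)$ (pointwise infimum) if and only if $B(\mathbf{x})-A(\mathbf{x})\le P_M^{(A,B)}(\mathbf{x})$ for all $\mathbf{x}\in[0,1]^2$.
   Context: For $Q:[0,1]^2\to\mathbb{R}$, $V_Q([s_1,s_2]\times[t_1,t_2])=Q(s_1,t_1)+Q(s_2,t_2)-Q(s_2,t_1)-Q(s_1,t_2)$. A copula is grounded ($Q(x,0)=Q(0,y)=0$), has neutral element 1 ($Q(x,1)=x$, $Q(1,y)=y$), and $V_Q(R)\ge0$ for all rectangles; a quasi-copula is grounded, has neutral element 1, and $V_Q(R)\ge0$ for rectangles having a side on the boundary of $[0,1]^2$. A rectangle is $[s_1,s_2]\times[t_1,t_2]\subseteq[0,1]^2$ with $s_1<s_2$, $t_1<t_2$; main corners: southwest and northeast; opposite corners: southeast and northwest. $\mathfrak{R}$: finite formal unions $R=R_1\sqcup\dots\sqcup R_n$ of rectangles (repetitions allowed), with multiplicity $m_R(\mathbf{y})=\sum_i m_{R_i}(\mathbf{y})$, where $m_{R_i}(\mathbf{y})$ is $1$ at main corners, $-1$ at opposite corners, $0$ elsewhere. $L^{(A,B)}(R)=\sum_{m_R(\mathbf{y})>0}B(\mathbf{y})m_R(\mathbf{y})+\sum_{m_R(\mathbf{y})<0}A(\mathbf{y})m_R(\mathbf{y})$;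 $P_M^{(A,B)}(\mathbf{x})=\inf\{L^{(A,B)}(R)/m_R(\mathbf{x}):R\in\mathfrak{R},m_R(\mathbf{x})>0\}$; $P_O^{(A,B)}(\mathbf{x})=\inf\{L^{(A,B)}(R)/(-m_R(\mathbf{x})):R\in\mathfrak{R},m_R(\mathbf{x})<0\}$; $\inf\emptyset=+\infty$. *)

theory Defs
  imports "HOL-Analysis.Analysis" "HOL-Library.Extended_Real"
begin

type_synonym pt = "real \<times> real"

definition unit_sq :: "pt set" where
  "unit_sq = {0..1} \<times> {0..1}"

text \<open>A rectangle [s1,s2] x [t1,t2] is encoded as the tuple (s1,s2,t1,t2).\<close>
type_synonym rect = "real \<times> real \<times> real \<times> real"

definition is_rect :: "rect \<Rightarrow> bool" where
  "is_rect r = (case r of (s1,s2,t1,t2) \<Rightarrow>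
      0 \<le> s1 \<and> s1 < s2 \<and> s2 \<le> 1 \<and> 0 \<le> t1 \<and> t1 < t2 \<and> t2 \<le> 1)"

definition Vol :: "(pt \<Rightarrow> real) \<Rightarrow> rect \<Rightarrow> real" where
  "Vol Q r = (case r of (s1,s2,t1,t2) \<Rightarrow>
      Q (s1,t1) + Q (s2,t2) - Q (s2,t1) - Q (s1,t2))"

definition grounded :: "(pt \<Rightarrow> real) \<Rightarrow> bool" where
  "grounded Q = (\<forall>x\<in>{0..1}. Q (x,0) = 0 \<and> Q (0,x) = 0)"

definition neutral1 :: "(pt \<Rightarrow> real) \<Rightarrow> bool" where
  "neutral1 Q = (\<forall>x\<in>{0..1}. Q (x,1) = x \<and> Q (1,x) = x)"

definition copula :: "(pt \<Rightarrow> real) \<Rightarrow> bool" where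
  "copula Q = (grounded Q \<and> neutral1 Q \<and> (\<forall>r. is_rect r \<longrightarrow> Vol Q r \<ge> 0))"

definition boundary_rect :: "rect \<Rightarrow> bool" where
  "boundary_rect r = (case r of (s1,s2,t1,t2) \<Rightarrow> s1 = 0 \<or> s2 = 1 \<or> t1 = 0 \<or> t2 = 1)"

definition quasi_copula :: "(pt \<Rightarrow> real) \<Rightarrow> bool" where
  "quasi_copula Q = (grounded Q \<and> neutral1 Q \<and>
      (\<forall>r. is_rect r \<and> boundary_rect r \<longrightarrow> Vol Q r \<ge> 0))"

definition mult_rect :: "rect \<Rightarrow> pt \<Rightarrow> int" where
  "mult_rect r y = (case r of (s1,s2,t1,t2) \<Rightarrow>
      if y = (s1,t1) \<or> y = (s2,t2) then 1
      else if y = (s2,t1) \<or> y = (s1,t2) then -1 else 0)"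

definition corners :: "rect \<Rightarrow> pt set" where
  "corners r = (case r of (s1,s2,t1,t2) \<Rightarrow> {(s1,t1),(s2,t2),(s2,t1),(s1,t2)})"

text \<open>Formal unions of rectangles (repetitions allowed) are lists of rectangles.\<close>
definition formal_union :: "rect list \<Rightarrow> bool" where
  "formal_union R = (\<forall>r\<in>set R. is_rect r)"

definition mult :: "rect list \<Rightarrow> pt \<Rightarrow> int" where
  "mult R y = (\<Sum>r\<leftarrow>R. mult_rect r y)"

definition Lfun :: "(pt \<Rightarrow> real) \<Rightarrow> (pt \<Rightarrow> real) \<Rightarrow> rect list \<Rightarrow> real" where
  "Lfun A B R =
     (\<Sum>y\<in>{y\<in>(\<Union>r\<in>set R. corners r). mult R y > 0}. B y * of_int (mult R y))
   + (\<Sum>y\<in>{y\<in>(\<Union>r\<in>set R. corners r). mult R y < 0}. A y * of_int (mult R y))"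

definition P_M :: "(pt \<Rightarrow> real) \<Rightarrow> (pt \<Rightarrow> real) \<Rightarrow> pt \<Rightarrow> ereal" where
  "P_M A B x = Inf {ereal (Lfun A B R / of_int (mult R x)) | R. formal_union R \<and> mult R x > 0}"

definition P_O :: "(pt \<Rightarrow> real) \<Rightarrow> (pt \<Rightarrow> real) \<Rightarrow> pt \<Rightarrow> ereal" where
  "P_O A B x = Inf {ereal (Lfun A B R / of_int (- mult R x)) | R. formal_union R \<and> mult R x < 0}"

definition copulas_between :: "(pt \<Rightarrow> real) \<Rightarrow> (pt \<Rightarrow> real) \<Rightarrow> (pt \<Rightarrow> real) set" where
  "copulas_between A B = {C. copula C \<and> (\<forall>x\<in>unit_sq. A x \<le> C x \<and> C x \<le> B x)}"

end

theory Submission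
  imports Defs
begin

text \<open>Testing \<open>Lfun A B\<close> against a copula \<open>C\<close> with \<open>A \<le> C \<le> B\<close> gives
  \<open>C x - A x \<le> P_O A B x\<close> and \<open>B x - C x \<le> P_M A B x\<close>, which is the necessity of both
  conditions. Conversely, \<open>Lfun lo hi \<ge> 0\<close> on all formal unions is enough for a copula
  between \<open>lo\<close> and \<open>hi\<close> to exist: on a finite grid the values at the inner nodes solve a
  linear system by an integer Farkas lemma, since an infeasibility certificate would be a
  formal union of grid cells with negative \<open>Lfun\<close>; a solution extends to a copula by bilinear
  interpolation; and compactness of the space of functions into \<open>[0, 1]\<close> passes from finite
  sets of points to the whole square. If \<open>B x - A x \<le> P_O A B x\<close>, raising \<open>A\<close> to \<open>B x\<close>
  at the single point \<open>x\<close> keeps \<open>Lfun\<close> nonnegative, so some copula between \<open>A\<close> and \<open>B\<close>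
  attains \<open>B\<close> at \<open>x\<close>; dually for \<open>P_M\<close> and \<open>A\<close>.\<close>

section \<open>Integer Farkas lemma by Fourier--Motzkin elimination\<close>

type_synonym 'v ineq = "('v \<Rightarrow> int) \<times> real"

definition satisfies_ineq :: "'v set \<Rightarrow> ('v \<Rightarrow> real) \<Rightarrow> 'v ineq \<Rightarrow> bool" where
  "satisfies_ineq V x c \<longleftrightarrow> (\<Sum>v\<in>V. of_int (fst c v) * x v) \<le> snd c"

inductive_set int_cone :: "'v ineq set \<Rightarrow> 'v ineq set" for K where
  int_cone_zero: "((\<lambda>v. 0), 0) \<in> int_cone K"
| int_cone_add_base: "(a, b) \<in> K \<Longrightarrow> (a', b') \<in> int_cone K \<Longrightarrow> ((\<lambda>v. a v + a' v), b + b') \<in> int_cone K"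

lemma int_cone_base: "(a, b) \<in> K \<Longrightarrow> (a, b) \<in> int_cone K"
  using int_cone_add_base[OF _ int_cone_zero, of a b K] by simp

lemma int_cone_add:
  assumes "(a, b) \<in> int_cone K" "(a', b') \<in> int_cone K"
  shows "((\<lambda>v. a v + a' v), b + b') \<in> int_cone K"
  using assms
proof (induction rule: int_cone.induct)
  case int_cone_zero
  then show ?case by simp
next
  case (int_cone_add_base a b a2 b2)
  then show ?case
    using int_cone.int_cone_add_base[of a b K "\<lambda>v. a2 v + a' v" "b2 + b'"]
    by (simp add: add.assoc)
qed

lemma int_cone_scale:
  assumes "(a, b) \<in> K"
  shows "((\<lambda>v. int n * a v), real n * b) \<in> int_cone K"
proof (induction n)
  case 0
  then show ?case using int_cone_zero by simp
next
  case (Suc n)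
  from int_cone_add_base[OF assms Suc] show ?case by (simp add: algebra_simps)
qed

lemma int_cone_subset:
  assumes "K' \<subseteq> int_cone K" "(a, b) \<in> int_cone K'"
  shows "(a, b) \<in> int_cone K"
  using assms(2)
proof (induction rule: int_cone.induct)
  case int_cone_zero
  then show ?case by (rule int_cone.int_cone_zero)
next
  case (int_cone_add_base a b a' b')
  then show ?case using int_cone_add assms(1) by blast
qed

definition fm_combine :: "'v \<Rightarrow> 'v ineq \<Rightarrow> 'v ineq \<Rightarrow> 'v ineq" where
  "fm_combine u p n =
     ((\<lambda>v. - fst n u * fst p v + fst p u * fst n v),
      of_int (- fst n u) * snd p + of_int (fst p u) * snd n)"

definition fm_eliminate :: "'v \<Rightarrow> 'v ineq set \<Rightarrow> 'v ineq set" where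
  "fm_eliminate u K = {c\<in>K. fst c u = 0} \<union>
     (\<lambda>(p, n). fm_combine u p n) ` ({c\<in>K. fst c u > 0} \<times> {c\<in>K. fst c u < 0})"

lemma finite_fm_eliminate: "finite K \<Longrightarrow> finite (fm_eliminate u K)"
  by (simp add: fm_eliminate_def)

lemma fm_eliminate_vanishing:
  assumes "\<forall>c\<in>K. \<forall>v. v \<notin> insert u V \<longrightarrow> fst c v = 0"
  shows "\<forall>c\<in>fm_eliminate u K. \<forall>v. v \<notin> V \<longrightarrow> fst c v = 0"
proof (intro ballI allI impI)
  fix c v assume c: "c \<in> fm_eliminate u K" and v: "v \<notin> V"
  show "fst c v = 0"
  proof (cases "v = u")
    case True
    then show ?thesis using c by (auto simp: fm_eliminate_def fm_combine_def)
  next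
    case False
    then have vanish: "fst c' v = 0" if "c' \<in> K" for c' using assms v that by blast
    show ?thesis using c by (auto simp: fm_eliminate_def fm_combine_def dest!: vanish)
  qed
qed

lemma fm_combine_in_int_cone:
  assumes "p \<in> K" "fst p u > 0" "n \<in> K" "fst n u < 0"
  shows "fm_combine u p n \<in> int_cone K"
proof -
  obtain ap bp an bn where pn: "p = (ap, bp)" "n = (an, bn)" by force
  have "((\<lambda>v. int (nat (- an u)) * ap v + int (nat (ap u)) * an v),
         real (nat (- an u)) * bp + real (nat (ap u)) * bn) \<in> int_cone K"
    using int_cone_add[OF int_cone_scale[of ap bp K "nat (- an u)"] int_cone_scale[of an bn K "nat (ap u)"]]
      assms pn by simp
  moreover have "int (nat (- an u)) = - an u" "int (nat (ap u)) = ap u"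
    "real (nat (- an u)) = of_int (- an u)" "real (nat (ap u)) = of_int (ap u)"
    using assms pn by auto
  ultimately show ?thesis
    using pn by (simp add: fm_combine_def)
qed

lemma fm_eliminate_subset_int_cone: "fm_eliminate u K \<subseteq> int_cone K"
  by (auto simp: fm_eliminate_def int_cone_base fm_combine_in_int_cone)

definition fm_bound :: "'v set \<Rightarrow> ('v \<Rightarrow> real) \<Rightarrow> 'v \<Rightarrow> 'v ineq \<Rightarrow> real" where
  "fm_bound V x u c = (snd c - (\<Sum>v\<in>V. of_int (fst c v) * x v)) / of_int (fst c u)"

lemma fm_bound_le_fm_bound:
  fixes x :: "'v \<Rightarrow> real"
  assumes "satisfies_ineq V x (fm_combine u p n)" "fst p u > 0" "fst n u < 0"
  shows "fm_bound V x u n \<le> fm_bound V x u p"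
proof -
  define r where "r c = (\<Sum>v\<in>V. of_int (fst c v) * x v)" for c :: "'v ineq"
  have "r (fm_combine u p n) = of_int (- fst n u) * r p + of_int (fst p u) * r n"
    unfolding r_def fm_combine_def sum_distrib_left sum.distrib[symmetric]
    by (intro sum.cong) (auto simp: algebra_simps)
  then have "of_int (- fst n u) * r p + of_int (fst p u) * r n
      \<le> of_int (- fst n u) * snd p + of_int (fst p u) * snd n"
    using assms(1) by (simp add: satisfies_ineq_def r_def fm_combine_def)
  moreover have "fm_bound V x u c = (snd c - r c) / of_int (fst c u)" for c
    by (simp add: fm_bound_def r_def)
  ultimately show ?thesis
    using assms(2,3) by (simp add: field_simps)
qed

lemma fm_eliminate_extend_solution:
  fixes x :: "'v \<Rightarrow> real"
  assumes "finite V" "u \<notin> V" "finite K" "\<forall>c\<in>fm_eliminate u K. satisfies_ineq V x c"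
  shows "\<exists>x'. \<forall>c\<in>K. satisfies_ineq (insert u V) x' c"
proof -
  define P where "P = {c\<in>K. fst c u > 0}"
  define N where "N = {c\<in>K. fst c u < 0}"
  define t where "t = (if N \<noteq> {} then Max (fm_bound V x u ` N)
                        else if P \<noteq> {} then Min (fm_bound V x u ` P) else 0)"
  have fin: "finite P" "finite N" using assms(3) by (auto simp: P_def N_def)
  have t_lower: "fm_bound V x u n \<le> t" if "n \<in> N" for n
    using that fin by (auto simp: t_def)
  have t_upper: "t \<le> fm_bound V x u p" if "p \<in> P" for p
  proof (cases "N = {}")
    case True
    then show ?thesis using that fin by (auto simp: t_def)
  next
    case False
    then have "t \<in> fm_bound V x u ` N"
      using Max_in[of "fm_bound V x u ` N"] fin by (simp add: t_def)
    then obtain n where "n \<in> N" "t = fm_bound V x u n" by blast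
    moreover have "fm_combine u p n \<in> fm_eliminate u K"
      using that \<open>n \<in> N\<close> by (auto simp: fm_eliminate_def P_def N_def)
    ultimately show ?thesis
      using fm_bound_le_fm_bound assms(4) that by (fastforce simp: P_def N_def)
  qed
  have sum_upd: "(\<Sum>v\<in>insert u V. of_int (fst c v) * (x(u := t)) v)
      = of_int (fst c u) * t + (\<Sum>v\<in>V. of_int (fst c v) * x v)" for c :: "'v ineq"
    using assms(1,2) by simp (intro sum.cong; auto)
  have "satisfies_ineq (insert u V) (x(u := t)) c" if "c \<in> K" for c
  proof (cases "fst c u" "0 :: int" rule: linorder_cases)
    case less
    then have "fm_bound V x u c \<le> t" using t_lower that by (simp add: N_def)
    then show ?thesis
      unfolding satisfies_ineq_def sum_upd using less by (simp add: fm_bound_def field_simps)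
  next
    case equal
    then have "c \<in> fm_eliminate u K" using that by (simp add: fm_eliminate_def)
    then have "satisfies_ineq V x c" using assms(4) by blast
    then show ?thesis
      unfolding satisfies_ineq_def sum_upd using equal by simp
  next
    case greater
    then have "t \<le> fm_bound V x u c" using t_upper that by (simp add: P_def)
    then show ?thesis
      unfolding satisfies_ineq_def sum_upd using greater by (simp add: fm_bound_def field_simps)
  qed
  then show ?thesis by blast
qed

text \<open>Fourier--Motzkin elimination keeps the coefficients integral, so infeasibility is
  witnessed by a nonnegative integer combination; for the grid systems below such a combination
  is a formal union of rectangles.\<close>
theorem int_farkas:
  assumes "finite V" "finite K" "\<forall>c\<in>K. \<forall>v. v \<notin> V \<longrightarrow> fst c v = 0"
  shows "(\<exists>x. \<forall>c\<in>K. satisfies_ineq V x c) \<or> (\<exists>b<0. ((\<lambda>v. 0), b) \<in> int_cone K)"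
  using assms
proof (induction V arbitrary: K rule: finite_induct)
  case empty
  show ?case
  proof (cases "\<forall>c\<in>K. 0 \<le> snd c")
    case True
    then show ?thesis by (auto simp: satisfies_ineq_def)
  next
    case False
    then obtain a b where ab: "(a, b) \<in> K" "b < 0" by auto
    have "a = (\<lambda>v. 0)" using empty(2) ab(1) by fastforce
    with ab int_cone_base[OF ab(1)] show ?thesis by auto
  qed
next
  case (insert u V)
  from insert.IH[OF finite_fm_eliminate[OF insert.prems(1)] fm_eliminate_vanishing[OF insert.prems(2)]]
  show ?case
  proof
    assume "\<exists>x. \<forall>c\<in>fm_eliminate u K. satisfies_ineq V x c"
    then show ?case using fm_eliminate_extend_solution[OF insert.hyps(1,2) insert.prems(1)] by blast
  next
    assume "\<exists>b<0. ((\<lambda>v. 0), b) \<in> int_cone (fm_eliminate u K)"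
    then obtain b where b: "b < 0" "((\<lambda>v. 0), b) \<in> int_cone (fm_eliminate u K)" by blast
    have "((\<lambda>v. 0), b) \<in> int_cone K"
      by (rule int_cone_subset[OF fm_eliminate_subset_int_cone b(2)])
    then show ?case using b(1) by blast
  qed
qed

section \<open>Multiplicities and the functional \<open>L\<close>\<close>

definition union_corners :: "rect list \<Rightarrow> pt set" where
  "union_corners R = (\<Union>r\<in>set R. corners r)"

lemma finite_corners [simp]: "finite (corners r)"
  by (cases r) (auto simp: corners_def)

lemma finite_union_corners [simp]: "finite (union_corners R)"
  by (auto simp: union_corners_def)

lemma mult_rect_eq_0: "y \<notin> corners r \<Longrightarrow> mult_rect r y = 0"
  by (cases r) (auto simp: mult_rect_def corners_def)

lemma corner_if_mult_rect_nonzero: "mult_rect r y \<noteq> 0 \<Longrightarrow> y \<in> corners r"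
  using mult_rect_eq_0 by blast

lemma mult_Nil [simp]: "mult [] y = 0"
  by (simp add: mult_def)

lemma mult_Cons [simp]: "mult (r # R) y = mult_rect r y + mult R y"
  by (simp add: mult_def)

lemma mult_eq_0: "y \<notin> union_corners R \<Longrightarrow> mult R y = 0"
  by (induction R) (auto simp: union_corners_def mult_rect_eq_0)

lemma corners_subset_unit_sq: "is_rect r \<Longrightarrow> corners r \<subseteq> unit_sq"
  by (cases r) (auto simp: corners_def is_rect_def unit_sq_def)

lemma union_corners_subset_unit_sq: "formal_union R \<Longrightarrow> union_corners R \<subseteq> unit_sq"
  unfolding formal_union_def union_corners_def using corners_subset_unit_sq by blast

lemma Vol_eq_sum_corners:
  assumes "is_rect r" "finite Y" "corners r \<subseteq> Y"
  shows "Vol Q r = (\<Sum>y\<in>Y. of_int (mult_rect r y) * Q y)"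
proof -
  obtain s1 s2 t1 t2 where r: "r = (s1, s2, t1, t2)" by (cases r)
  with assms(1) have "s1 < s2" "t1 < t2" by (auto simp: is_rect_def)
  then have "Vol Q r = (\<Sum>y\<in>corners r. of_int (mult_rect r y) * Q y)"
    using r by (simp add: Vol_def corners_def mult_rect_def)
  also have "\<dots> = (\<Sum>y\<in>Y. of_int (mult_rect r y) * Q y)"
    using assms(2,3) by (intro sum.mono_neutral_left) (auto simp: mult_rect_eq_0)
  finally show ?thesis .
qed

lemma sum_list_Vol:
  assumes "formal_union R" "finite Y" "union_corners R \<subseteq> Y"
  shows "(\<Sum>r\<leftarrow>R. Vol Q r) = (\<Sum>y\<in>Y. of_int (mult R y) * Q y)"
  using assms
proof (induction R)
  case (Cons r R)
  then have "is_rect r" "corners r \<subseteq> Y" "formal_union R" "union_corners R \<subseteq> Y"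
    by (auto simp: formal_union_def union_corners_def)
  with Cons show ?case
    by (simp add: Vol_eq_sum_corners sum.distrib distrib_right)
qed simp

definition Lterm :: "(pt \<Rightarrow> real) \<Rightarrow> (pt \<Rightarrow> real) \<Rightarrow> int \<Rightarrow> pt \<Rightarrow> real" where
  "Lterm lo hi k y = (if k > 0 then hi y * of_int k else if k < 0 then lo y * of_int k else 0)"

lemma Lfun_eq_sum_Lterm:
  assumes "finite Y" "union_corners R \<subseteq> Y"
  shows "Lfun lo hi R = (\<Sum>y\<in>Y. Lterm lo hi (mult R y) y)"
proof -
  have "Lfun lo hi R = (\<Sum>y\<in>union_corners R. if mult R y > 0 then hi y * of_int (mult R y) else 0)
        + (\<Sum>y\<in>union_corners R. if mult R y < 0 then lo y * of_int (mult R y) else 0)"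
    unfolding Lfun_def union_corners_def[symmetric]
    by (simp add: sum.inter_filter)
  also have "\<dots> = (\<Sum>y\<in>union_corners R. Lterm lo hi (mult R y) y)"
    unfolding sum.distrib[symmetric] Lterm_def by (intro sum.cong) auto
  also have "\<dots> = (\<Sum>y\<in>Y. Lterm lo hi (mult R y) y)"
    using assms by (intro sum.mono_neutral_left) (auto simp: Lterm_def mult_eq_0)
  finally show ?thesis .
qed

lemma Lterm_ge:
  assumes "lo y \<le> c" "c \<le> hi y"
  shows "of_int k * c \<le> Lterm lo hi k y"
proof -
  have "k > 0 \<Longrightarrow> c * of_int k \<le> hi y * of_int k" using assms by (simp add: mult_right_mono)
  moreover have "k < 0 \<Longrightarrow> c * of_int k \<le> lo y * of_int k" using assms by (simp add: mult_right_mono_neg)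
  ultimately show ?thesis by (auto simp: Lterm_def algebra_simps)
qed

text \<open>\<open>Lfun lo hi R - (\<Sum>r\<leftarrow>R. Vol C r)\<close> is a sum over the corners \<open>y\<close> of the
  nonnegative terms \<open>Lterm lo hi (mult R y) y - mult R y * C y\<close>.\<close>
lemma Lterm_le_Lfun:
  assumes R: "formal_union R" and C: "\<forall>r. is_rect r \<longrightarrow> Vol C r \<ge> 0"
    and between: "\<forall>y\<in>unit_sq. lo y \<le> C y \<and> C y \<le> hi y"
  shows "Lterm lo hi (mult R x) x - of_int (mult R x) * C x \<le> Lfun lo hi R"
proof -
  define Y where "Y = insert x (union_corners R)"
  have Y: "finite Y" "union_corners R \<subseteq> Y" "x \<in> Y" by (auto simp: Y_def)
  have "Lterm lo hi (mult R x) x - of_int (mult R x) * C x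
      \<le> (\<Sum>y\<in>Y. Lterm lo hi (mult R y) y - of_int (mult R y) * C y)"
  proof (rule member_le_sum[OF Y(3) _ Y(1)])
    fix y assume "y \<in> Y - {x}"
    then have "y \<in> unit_sq" using union_corners_subset_unit_sq[OF R] by (auto simp: Y_def)
    then show "0 \<le> Lterm lo hi (mult R y) y - of_int (mult R y) * C y"
      using between Lterm_ge[of lo y "C y" hi] by auto
  qed
  also have "\<dots> = Lfun lo hi R - (\<Sum>r\<leftarrow>R. Vol C r)"
    by (simp add: Lfun_eq_sum_Lterm[OF Y(1,2)] sum_list_Vol[OF R Y(1,2)] sum_subtractf)
  also have "\<dots> \<le> Lfun lo hi R"
  proof -
    have "0 \<le> (\<Sum>r\<leftarrow>R. Vol C r)"
      using R C by (intro sum_list_nonneg) (auto simp: formal_union_def)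
    then show ?thesis by linarith
  qed
  finally show ?thesis .
qed

lemma Lfun_nonneg:
  assumes "formal_union R" "\<forall>r. is_rect r \<longrightarrow> Vol C r \<ge> 0"
    and "\<forall>y\<in>unit_sq. lo y \<le> C y \<and> C y \<le> hi y"
  shows "0 \<le> Lfun lo hi R"
proof -
  have "(2, 2) \<notin> union_corners R"
    using union_corners_subset_unit_sq[OF assms(1)] by (auto simp: unit_sq_def)
  then show ?thesis
    using Lterm_le_Lfun[OF assms, of "(2, 2)"] by (simp add: mult_eq_0 Lterm_def)
qed

lemma Lterm_upd_lo:
  "Lterm (lo(x := v)) hi k y = Lterm lo hi k y + (if y = x then if k < 0 then (v - lo x) * of_int k else 0 else 0)"
  by (auto simp: Lterm_def algebra_simps)

lemma Lterm_upd_hi: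
  "Lterm lo (hi(x := v)) k y = Lterm lo hi k y + (if y = x then if k > 0 then (v - hi x) * of_int k else 0 else 0)"
  by (auto simp: Lterm_def algebra_simps)

lemma Lfun_upd_lo:
  "Lfun (lo(x := v)) hi R = Lfun lo hi R + (if mult R x < 0 then (v - lo x) * of_int (mult R x) else 0)"
proof -
  define Y where "Y = insert x (union_corners R)"
  have Y: "finite Y" "union_corners R \<subseteq> Y" "x \<in> Y" by (auto simp: Y_def)
  show ?thesis
    unfolding Lfun_eq_sum_Lterm[OF Y(1,2)] Lterm_upd_lo sum.distrib sum.delta[OF Y(1)]
    using Y(3) by simp
qed

lemma Lfun_upd_hi:
  "Lfun lo (hi(x := v)) R = Lfun lo hi R + (if mult R x > 0 then (v - hi x) * of_int (mult R x) else 0)"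
proof -
  define Y where "Y = insert x (union_corners R)"
  have Y: "finite Y" "union_corners R \<subseteq> Y" "x \<in> Y" by (auto simp: Y_def)
  show ?thesis
    unfolding Lfun_eq_sum_Lterm[OF Y(1,2)] Lterm_upd_hi sum.distrib sum.delta[OF Y(1)]
    using Y(3) by simp
qed

section \<open>Bilinear interpolation on a grid\<close>

definition unit_partition :: "(nat \<Rightarrow> real) \<Rightarrow> nat \<Rightarrow> bool" where
  "unit_partition a p \<longleftrightarrow> (\<forall>i<p. a i < a (Suc i)) \<and> a 0 = 0 \<and> a p = 1"

lemma increasing_le:
  fixes a :: "nat \<Rightarrow> real"
  assumes "\<forall>i<p. a i < a (Suc i)" "i \<le> j" "j \<le> p"
  shows "a i \<le> a j"
  using assms(2,3)
proof (induction j rule: dec_induct)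
  case (step n)
  then show ?case using assms(1) by (meson Suc_le_lessD less_imp_le order.trans)
qed simp

lemma unit_partition_range:
  "unit_partition a p \<Longrightarrow> i \<le> p \<Longrightarrow> a i \<in> {0..1}"
  using increasing_le[of p a 0 i] increasing_le[of p a i p] by (auto simp: unit_partition_def)

definition ramp :: "(nat \<Rightarrow> real) \<Rightarrow> nat \<Rightarrow> real \<Rightarrow> real" where
  "ramp a i s = (min s (a (Suc i)) - min s (a i)) / (a (Suc i) - a i)"

lemma ramp_mono:
  assumes "a i < a (Suc i)" "s \<le> s'"
  shows "ramp a i s \<le> ramp a i s'"
proof -
  have "min s (a (Suc i)) - min s (a i) \<le> min s' (a (Suc i)) - min s' (a i)"
    using assms by (auto simp: min_def)
  then show ?thesis unfolding ramp_def using assms(1) by (simp add: divide_right_mono)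
qed

lemma ramp_eq_0: "s \<le> a i \<Longrightarrow> a i < a (Suc i) \<Longrightarrow> ramp a i s = 0"
  by (simp add: ramp_def min_def)

lemma ramp_eq_1: "a (Suc i) \<le> s \<Longrightarrow> a i < a (Suc i) \<Longrightarrow> ramp a i s = 1"
  by (simp add: ramp_def min_def)

lemma ramp_node:
  assumes "\<forall>i<p. a i < a (Suc i)" "i < p" "k \<le> p"
  shows "ramp a i (a k) = (if i < k then 1 else 0)"
  using increasing_le[OF assms(1), of "Suc i" k] increasing_le[OF assms(1), of k i] assms
  by (auto intro!: ramp_eq_0 ramp_eq_1)

lemma sum_ramp:
  assumes "\<forall>i<p. a i < a (Suc i)"
  shows "(\<Sum>i<p. ramp a i s * (a (Suc i) - a i)) = min s (a p) - min s (a 0)"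
proof -
  have "(\<Sum>i<p. ramp a i s * (a (Suc i) - a i)) = (\<Sum>i<p. min s (a (Suc i)) - min s (a i))"
    using assms by (intro sum.cong) (auto simp: ramp_def)
  also have "\<dots> = min s (a p) - min s (a 0)"
    by (rule sum_lessThan_telescope)
  finally show ?thesis .
qed

lemma sum_Vol_column:
  "(\<Sum>j<l. Vol D (s1, s2, b j, b (Suc j))) = Vol D (s1, s2, b 0, b l)"
  using sum_lessThan_telescope[of "\<lambda>j. D (s2, b j) - D (s1, b j)" l]
  by (simp add: Vol_def algebra_simps)

lemma sum_Vol_row:
  "(\<Sum>i<k. Vol D (a i, a (Suc i), t1, t2)) = Vol D (a 0, a k, t1, t2)"
  using sum_lessThan_telescope[of "\<lambda>i. D (a i, t2) - D (a i, t1)" k]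
  by (simp add: Vol_def algebra_simps)

lemma sum_Vol_grid:
  "(\<Sum>i<k. \<Sum>j<l. Vol D (a i, a (Suc i), b j, b (Suc j))) = Vol D (a 0, a k, b 0, b l)"
  by (simp add: sum_Vol_column sum_Vol_row)

lemma sum_lessThan_if_less:
  fixes k p :: nat
  shows "k \<le> p \<Longrightarrow> (\<Sum>i<p. if i < k then f i else 0) = (\<Sum>i<k. f i)"
  by (rule sum.mono_neutral_cong_right) auto

definition bilinear_interp ::
    "(nat \<Rightarrow> real) \<Rightarrow> nat \<Rightarrow> (nat \<Rightarrow> real) \<Rightarrow> nat \<Rightarrow> (pt \<Rightarrow> real) \<Rightarrow> pt \<Rightarrow> real" where
  "bilinear_interp a p b q D z =
     (\<Sum>i<p. \<Sum>j<q. Vol D (a i, a (Suc i), b j, b (Suc j)) * ramp a i (fst z) * ramp b j (snd z))"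

lemma bilinear_interp_node:
  assumes "\<forall>i<p. a i < a (Suc i)" "\<forall>j<q. b j < b (Suc j)" "k \<le> p" "l \<le> q"
  shows "bilinear_interp a p b q D (a k, b l) = Vol D (a 0, a k, b 0, b l)"
proof -
  have "bilinear_interp a p b q D (a k, b l)
      = (\<Sum>i<p. if i < k then (\<Sum>j<q. if j < l then Vol D (a i, a (Suc i), b j, b (Suc j)) else 0) else 0)"
    unfolding bilinear_interp_def
    by (intro sum.cong) (auto simp: ramp_node[OF assms(1) _ assms(3)] ramp_node[OF assms(2) _ assms(4)]
        intro!: sum.cong)
  also have "\<dots> = (\<Sum>i<k. \<Sum>j<l. Vol D (a i, a (Suc i), b j, b (Suc j)))"
    using assms(3,4) by (simp add: sum_lessThan_if_less)
  finally show ?thesis by (simp add: sum_Vol_grid)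
qed

lemma Vol_bilinear_interp:
  "Vol (bilinear_interp a p b q D) (s1, s2, t1, t2) =
     (\<Sum>i<p. \<Sum>j<q. Vol D (a i, a (Suc i), b j, b (Suc j))
        * (ramp a i s2 - ramp a i s1) * (ramp b j t2 - ramp b j t1))"
  unfolding Vol_def bilinear_interp_def
  by (simp add: sum_subtractf[symmetric] sum.distrib[symmetric] algebra_simps)

lemma Vol_bilinear_interp_nonneg:
  assumes "\<forall>i<p. a i < a (Suc i)" "\<forall>j<q. b j < b (Suc j)"
    and "\<forall>i<p. \<forall>j<q. 0 \<le> Vol D (a i, a (Suc i), b j, b (Suc j))"
    and "s1 \<le> s2" "t1 \<le> t2"
  shows "0 \<le> Vol (bilinear_interp a p b q D) (s1, s2, t1, t2)"
  unfolding Vol_bilinear_interp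
  using assms ramp_mono[of a _ s1 s2] ramp_mono[of b _ t1 t2]
  by (intro sum_nonneg mult_nonneg_nonneg) auto

lemma bilinear_interp_copula:
  assumes a: "unit_partition a p" and b: "unit_partition b q"
    and bottom: "\<forall>i\<le>p. D (a i, 0) = 0" and top: "\<forall>i\<le>p. D (a i, 1) = a i"
    and left: "\<forall>j\<le>q. D (0, b j) = 0" and right: "\<forall>j\<le>q. D (1, b j) = b j"
    and cells: "\<forall>i<p. \<forall>j<q. 0 \<le> Vol D (a i, a (Suc i), b j, b (Suc j))"
  shows "copula (bilinear_interp a p b q D)"
    and "\<forall>i\<le>p. \<forall>j\<le>q. bilinear_interp a p b q D (a i, b j) = D (a i, b j)"
proof -
  let ?C = "bilinear_interp a p b q D"
  have a_inc: "\<forall>i<p. a i < a (Suc i)" and b_inc: "\<forall>j<q. b j < b (Suc j)"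
    using a b by (auto simp: unit_partition_def)
  have a_range: "a i \<in> {0..1}" if "i \<le> p" for i using unit_partition_range[OF a that] .
  have b_range: "b j \<in> {0..1}" if "j \<le> q" for j using unit_partition_range[OF b that] .
  have "grounded ?C"
    unfolding grounded_def bilinear_interp_def using a_inc b_inc a_range b_range
    by (simp add: ramp_eq_0)
  moreover have "?C (s, 1) = s" if "s \<in> {0..1}" for s
  proof -
    have "?C (s, 1) = (\<Sum>i<p. ramp a i s * Vol D (a i, a (Suc i), b 0, b q))"
      unfolding bilinear_interp_def sum_Vol_column[symmetric] sum_distrib_left
      using b_inc b_range by (intro sum.cong) (auto simp: ramp_eq_1 algebra_simps)
    also have "\<dots> = (\<Sum>i<p. ramp a i s * (a (Suc i) - a i))"
      using b bottom top by (intro sum.cong) (auto simp: unit_partition_def Vol_def)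
    finally show ?thesis using sum_ramp[OF a_inc] a that by (simp add: unit_partition_def)
  qed
  moreover have "?C (1, t) = t" if "t \<in> {0..1}" for t
  proof -
    have "?C (1, t) = (\<Sum>j<q. ramp b j t * Vol D (a 0, a p, b j, b (Suc j)))"
      unfolding bilinear_interp_def sum_Vol_row[symmetric] sum_distrib_left sum.swap[of _ "{..<p}"]
      using a_inc a_range by (intro sum.cong) (auto simp: ramp_eq_1 algebra_simps)
    also have "\<dots> = (\<Sum>j<q. ramp b j t * (b (Suc j) - b j))"
      using a left right by (intro sum.cong) (auto simp: unit_partition_def Vol_def)
    finally show ?thesis using sum_ramp[OF b_inc] b that by (simp add: unit_partition_def)
  qed
  moreover have "0 \<le> Vol ?C r" if "is_rect r" for r
    using that Vol_bilinear_interp_nonneg[OF a_inc b_inc cells]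
    by (cases r) (auto simp: is_rect_def)
  ultimately show "copula ?C"
    by (simp add: copula_def neutral1_def)
  show "\<forall>i\<le>p. \<forall>j\<le>q. ?C (a i, b j) = D (a i, b j)"
    using bilinear_interp_node[OF a_inc b_inc] a b bottom left
    by (auto simp: Vol_def unit_partition_def)
qed

section \<open>Copulas between two bounds on a grid\<close>

lemma Lterm_nonneg_eq: "0 \<le> k \<Longrightarrow> Lterm lo hi k y = of_int k * hi y"
  by (simp add: Lterm_def)

lemma Lterm_nonpos_eq: "k \<le> 0 \<Longrightarrow> Lterm lo hi k y = of_int k * lo y"
  by (simp add: Lterm_def)

lemma Lterm_succ_le:
  assumes "lo y \<le> hi y"
  shows "Lterm lo hi (k + 1) y \<le> Lterm lo hi k y + hi y"
proof (cases "0 \<le> k")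
  case True
  then show ?thesis by (simp add: Lterm_nonneg_eq algebra_simps)
next
  case False
  then have "k + 1 \<le> 0" by simp
  with False show ?thesis using assms by (simp add: Lterm_nonpos_eq algebra_simps)
qed

lemma Lterm_pred_le:
  assumes "lo y \<le> hi y"
  shows "Lterm lo hi (k - 1) y \<le> Lterm lo hi k y - lo y"
proof (cases "k \<le> 0")
  case True
  then show ?thesis by (simp add: Lterm_nonpos_eq algebra_simps)
next
  case False
  then have "0 \<le> k - 1" by simp
  with False show ?thesis using assms by (simp add: Lterm_nonneg_eq algebra_simps)
qed

lemma sum_single_coefficient:
  assumes "finite V" "v \<in> V"
  shows "(\<Sum>w\<in>V. of_int (if w = v then c else 0) * x w) = of_int c * (x v :: real)"
proof -
  have "(\<Sum>w\<in>V. of_int (if w = v then c else 0) * x w) = (\<Sum>w\<in>V. if w = v then of_int c * x w else 0)"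
    by (intro sum.cong) auto
  then show ?thesis using assms by simp
qed

locale copula_grid =
  fixes lo hi :: "pt \<Rightarrow> real" and a :: "nat \<Rightarrow> real" and p :: nat and b :: "nat \<Rightarrow> real" and q :: nat
  assumes a: "unit_partition a p" and b: "unit_partition b q"
    and lo: "grounded lo" "neutral1 lo" and hi: "grounded hi" "neutral1 hi"
    and lo_le_hi: "\<forall>y\<in>unit_sq. lo y \<le> hi y"
begin

definition nodes :: "pt set" where
  "nodes = a ` {..p} \<times> b ` {..q}"

definition inner_nodes :: "pt set" where
  "inner_nodes = {v\<in>nodes. fst v \<notin> {0, 1} \<and> snd v \<notin> {0, 1}}"

definition cells :: "rect set" where
  "cells = (\<lambda>(i, j). (a i, a (Suc i), b j, b (Suc j))) ` ({..<p} \<times> {..<q})"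

lemma finite_nodes: "finite nodes" "finite inner_nodes"
  by (auto simp: nodes_def inner_nodes_def)

lemma nodes_subset_unit_sq: "nodes \<subseteq> unit_sq"
  using unit_partition_range[OF a] unit_partition_range[OF b] by (auto simp: nodes_def unit_sq_def)

lemma lo_eq_hi_boundary: "y \<in> nodes - inner_nodes \<Longrightarrow> lo y = hi y"
  using nodes_subset_unit_sq lo hi
  by (cases y) (auto simp: inner_nodes_def unit_sq_def grounded_def neutral1_def)

lemma cell_is_rect: "c \<in> cells \<Longrightarrow> is_rect c"
  using a b unit_partition_range[OF a] unit_partition_range[OF b]
  by (fastforce simp: cells_def is_rect_def unit_partition_def)

lemma corners_cell: "c \<in> cells \<Longrightarrow> corners c \<subseteq> nodes"
  by (auto simp: cells_def corners_def nodes_def)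

text \<open>The unknowns of the linear system are the values at the inner nodes; at boundary
  nodes the value is forced to be \<open>lo = hi\<close>. A system inequality \<open>(\<alpha>, \<beta>)\<close> reads
  \<open>\<Sum>v. \<alpha> v * x v \<le> \<beta>\<close>, so the cell inequality says \<open>0 \<le> Vol D c\<close>.\<close>
definition cell_ineq :: "rect \<Rightarrow> pt ineq" where
  "cell_ineq c = ((\<lambda>v. if v \<in> inner_nodes then - mult_rect c v else 0),
                  \<Sum>y\<in>corners c - inner_nodes. of_int (mult_rect c y) * lo y)"

definition upper_ineq :: "pt \<Rightarrow> pt ineq" where
  "upper_ineq v = ((\<lambda>w. if w = v then 1 else 0), hi v)"

definition lower_ineq :: "pt \<Rightarrow> pt ineq" where
  "lower_ineq v = ((\<lambda>w. if w = v then -1 else 0), - lo v)"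

definition grid_system :: "pt ineq set" where
  "grid_system = cell_ineq ` cells \<union> upper_ineq ` inner_nodes \<union> lower_ineq ` inner_nodes"

lemma finite_grid_system: "finite grid_system"
  using finite_nodes by (simp add: grid_system_def cells_def)

lemma grid_system_vanishing: "\<forall>c\<in>grid_system. \<forall>v. v \<notin> inner_nodes \<longrightarrow> fst c v = 0"
  by (auto simp: grid_system_def cell_ineq_def upper_ineq_def lower_ineq_def)

lemma satisfies_upper_ineq:
  "v \<in> inner_nodes \<Longrightarrow> satisfies_ineq inner_nodes x (upper_ineq v) \<longleftrightarrow> x v \<le> hi v"
  using finite_nodes by (simp add: satisfies_ineq_def upper_ineq_def sum_single_coefficient)

lemma satisfies_lower_ineq:
  "v \<in> inner_nodes \<Longrightarrow> satisfies_ineq inner_nodes x (lower_ineq v) \<longleftrightarrow> lo v \<le> x v"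
  using finite_nodes by (simp add: satisfies_ineq_def lower_ineq_def sum_single_coefficient)

lemma satisfies_cell_ineq:
  assumes "c \<in> cells"
  shows "satisfies_ineq inner_nodes x (cell_ineq c)
     \<longleftrightarrow> 0 \<le> Vol (\<lambda>y. if y \<in> inner_nodes then x y else lo y) c"
proof -
  let ?D = "\<lambda>y. if y \<in> inner_nodes then x y else lo y"
  have "Vol ?D c = (\<Sum>y\<in>corners c. of_int (mult_rect c y) * ?D y)"
    using cell_is_rect[OF assms] by (simp add: Vol_eq_sum_corners)
  also have "\<dots> = (\<Sum>y\<in>corners c \<inter> inner_nodes. of_int (mult_rect c y) * x y)
      + (\<Sum>y\<in>corners c - inner_nodes. of_int (mult_rect c y) * lo y)"
    by (simp add: sum.Int_Diff[of "corners c" _ inner_nodes])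
  also have "(\<Sum>y\<in>corners c \<inter> inner_nodes. of_int (mult_rect c y) * x y)
      = (\<Sum>y\<in>inner_nodes. of_int (mult_rect c y) * x y)"
    using finite_nodes by (intro sum.mono_neutral_left) (auto dest: corner_if_mult_rect_nonzero)
  finally have "Vol ?D c = (\<Sum>y\<in>inner_nodes. of_int (mult_rect c y) * x y)
      + (\<Sum>y\<in>corners c - inner_nodes. of_int (mult_rect c y) * lo y)" .
  moreover have "satisfies_ineq inner_nodes x (cell_ineq c) \<longleftrightarrow>
      - (\<Sum>y\<in>inner_nodes. of_int (mult_rect c y) * x y)
      \<le> (\<Sum>y\<in>corners c - inner_nodes. of_int (mult_rect c y) * lo y)"
    by (simp add: satisfies_ineq_def cell_ineq_def sum_negf)
  ultimately show ?thesis by linarith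
qed

lemma grid_system_solution_copula:
  assumes x: "\<forall>c\<in>grid_system. satisfies_ineq inner_nodes x c"
  shows "\<exists>C. copula C \<and> (\<forall>y\<in>nodes. lo y \<le> C y \<and> C y \<le> hi y)"
proof -
  define D where "D = (\<lambda>y. if y \<in> inner_nodes then x y else lo y)"
  have D_between: "lo y \<le> D y \<and> D y \<le> hi y" if "y \<in> nodes" for y
    using x that lo_le_hi nodes_subset_unit_sq lo_eq_hi_boundary
      satisfies_upper_ineq[of y x] satisfies_lower_ineq[of y x]
    by (auto simp: D_def grid_system_def)
  have cells: "\<forall>i<p. \<forall>j<q. 0 \<le> Vol D (a i, a (Suc i), b j, b (Suc j))"
  proof (intro allI impI)
    fix i j assume "i < p" "j < q"
    then have c: "(a i, a (Suc i), b j, b (Suc j)) \<in> cells" by (force simp: cells_def)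
    then have "satisfies_ineq inner_nodes x (cell_ineq (a i, a (Suc i), b j, b (Suc j)))"
      using x by (simp add: grid_system_def)
    then show "0 \<le> Vol D (a i, a (Suc i), b j, b (Suc j))"
      unfolding D_def using satisfies_cell_ineq[OF c] by simp
  qed
  have not_inner: "(s, t) \<notin> inner_nodes" if "s \<in> {0, 1} \<or> t \<in> {0, 1}" for s t
    using that by (auto simp: inner_nodes_def)
  have "\<forall>i\<le>p. D (a i, 0) = 0" "\<forall>i\<le>p. D (a i, 1) = a i"
       "\<forall>j\<le>q. D (0, b j) = 0" "\<forall>j\<le>q. D (1, b j) = b j"
    using lo unit_partition_range[OF a] unit_partition_range[OF b] not_inner
    by (auto simp: D_def grounded_def neutral1_def)
  from bilinear_interp_copula[OF a b this cells]
  have C: "copula (bilinear_interp a p b q D)"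
    and agree: "\<forall>y\<in>nodes. bilinear_interp a p b q D y = D y"
    by (auto simp: nodes_def)
  show ?thesis
    by (rule exI[of _ "bilinear_interp a p b q D"]) (simp add: C agree D_between)
qed

text \<open>The invariant of nonnegative integer combinations \<open>(\<alpha>, \<beta>)\<close> of the system: the cell
  inequalities used form a union \<open>R\<close>, and each use of an upper or lower bound at \<open>v\<close> moves
  \<open>\<alpha> v\<close> by \<open>\<plusminus>1\<close> while adding at least the corresponding change of \<open>Lterm\<close> to \<open>\<beta>\<close>.\<close>
definition grid_Lsum :: "rect list \<Rightarrow> (pt \<Rightarrow> int) \<Rightarrow> real" where
  "grid_Lsum R \<alpha> = (\<Sum>v\<in>inner_nodes. Lterm lo hi (mult R v + \<alpha> v) v)
     + (\<Sum>y\<in>nodes - inner_nodes. of_int (mult R y) * lo y)"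

lemma Lfun_eq_grid_Lsum:
  assumes "set R \<subseteq> cells"
  shows "Lfun lo hi R = grid_Lsum R (\<lambda>v. 0)"
proof -
  have "union_corners R \<subseteq> nodes"
    unfolding union_corners_def using assms corners_cell by blast
  then have "Lfun lo hi R = (\<Sum>y\<in>nodes. Lterm lo hi (mult R y) y)"
    using finite_nodes by (simp add: Lfun_eq_sum_Lterm)
  also have "\<dots> = (\<Sum>y\<in>inner_nodes. Lterm lo hi (mult R y) y)
      + (\<Sum>y\<in>nodes - inner_nodes. Lterm lo hi (mult R y) y)"
    using finite_nodes by (simp add: sum.subset_diff[of inner_nodes nodes] inner_nodes_def)
  also have "(\<Sum>y\<in>nodes - inner_nodes. Lterm lo hi (mult R y) y)
      = (\<Sum>y\<in>nodes - inner_nodes. of_int (mult R y) * lo y)"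
    using lo_eq_hi_boundary by (intro sum.cong) (auto simp: Lterm_def)
  finally show ?thesis by (simp add: grid_Lsum_def)
qed

lemma grid_Lsum_add_single:
  assumes "v \<in> inner_nodes"
  shows "grid_Lsum R (\<lambda>w. (if w = v then d else 0) + \<alpha> w)
    = grid_Lsum R \<alpha> + (Lterm lo hi (mult R v + \<alpha> v + d) v - Lterm lo hi (mult R v + \<alpha> v) v)"
proof -
  let ?f = "\<lambda>\<alpha>' w. Lterm lo hi (mult R w + \<alpha>' w) w"
  have "(\<Sum>w\<in>inner_nodes - {v}. ?f (\<lambda>w. (if w = v then d else 0) + \<alpha> w) w)
      = (\<Sum>w\<in>inner_nodes - {v}. ?f \<alpha> w)"
    by (intro sum.cong) auto
  then show ?thesis
    using sum.remove[OF finite_nodes(2) assms, of "?f \<alpha>"]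
      sum.remove[OF finite_nodes(2) assms, of "?f (\<lambda>w. (if w = v then d else 0) + \<alpha> w)"]
    by (simp add: grid_Lsum_def ac_simps)
qed

lemma grid_Lsum_Cons_cell:
  assumes "c \<in> cells"
  shows "grid_Lsum (c # R) (\<lambda>v. fst (cell_ineq c) v + \<alpha> v) = grid_Lsum R \<alpha> + snd (cell_ineq c)"
proof -
  have "(\<Sum>y\<in>nodes - inner_nodes. of_int (mult_rect c y) * lo y) = snd (cell_ineq c)"
    unfolding cell_ineq_def snd_conv using corners_cell[OF assms] finite_nodes
    by (intro sum.mono_neutral_right) (auto dest: corner_if_mult_rect_nonzero)
  then show ?thesis
    by (simp add: grid_Lsum_def cell_ineq_def sum.distrib distrib_right)
qed

lemma int_cone_grid_system:
  assumes "(\<alpha>, \<beta>) \<in> int_cone grid_system"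
  shows "\<exists>R. set R \<subseteq> cells \<and> grid_Lsum R \<alpha> \<le> \<beta>"
  using assms
proof (induction rule: int_cone.induct)
  case int_cone_zero
  have "grid_Lsum [] (\<lambda>v. 0) = 0" by (simp add: grid_Lsum_def Lterm_def)
  then show ?case by (metis empty_set empty_subsetI order_refl)
next
  case (int_cone_add_base \<alpha>1 \<beta>1 \<alpha>2 \<beta>2)
  then obtain R where R: "set R \<subseteq> cells" "grid_Lsum R \<alpha>2 \<le> \<beta>2" by blast
  let ?\<alpha> = "\<lambda>v. \<alpha>1 v + \<alpha>2 v"
  from int_cone_add_base(1) consider (cell) c where "c \<in> cells" "(\<alpha>1, \<beta>1) = cell_ineq c"
    | (upper) v where "v \<in> inner_nodes" "(\<alpha>1, \<beta>1) = upper_ineq v"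
    | (lower) v where "v \<in> inner_nodes" "(\<alpha>1, \<beta>1) = lower_ineq v"
    by (auto simp: grid_system_def)
  then show ?case
  proof cases
    case cell
    then have "\<alpha>1 = fst (cell_ineq c)" "\<beta>1 = snd (cell_ineq c)"
      by (metis fst_conv, metis snd_conv)
    then have "grid_Lsum (c # R) ?\<alpha> = grid_Lsum R \<alpha>2 + \<beta>1"
      using grid_Lsum_Cons_cell[OF cell(1)] by simp
    moreover have "set (c # R) \<subseteq> cells" using R(1) cell(1) by simp
    ultimately show ?thesis using R(2) by (intro exI[of _ "c # R"]) simp
  next
    case upper
    have "lo v \<le> hi v" using upper(1) lo_le_hi nodes_subset_unit_sq by (auto simp: inner_nodes_def)
    then have step: "Lterm lo hi (mult R v + \<alpha>2 v + 1) v \<le> Lterm lo hi (mult R v + \<alpha>2 v) v + hi v"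
      by (rule Lterm_succ_le)
    have \<alpha>1: "\<alpha>1 = (\<lambda>w. if w = v then 1 else 0)" and \<beta>1: "\<beta>1 = hi v"
      using upper(2) by (simp_all add: upper_ineq_def)
    have "grid_Lsum R ?\<alpha> = grid_Lsum R \<alpha>2
        + (Lterm lo hi (mult R v + \<alpha>2 v + 1) v - Lterm lo hi (mult R v + \<alpha>2 v) v)"
      unfolding \<alpha>1 by (rule grid_Lsum_add_single[OF upper(1)])
    then have "grid_Lsum R ?\<alpha> \<le> \<beta>1 + \<beta>2" using R(2) step \<beta>1 by linarith
    with R(1) show ?thesis by blast
  next
    case lower
    have "lo v \<le> hi v" using lower(1) lo_le_hi nodes_subset_unit_sq by (auto simp: inner_nodes_def)
    then have "Lterm lo hi (mult R v + \<alpha>2 v - 1) v \<le> Lterm lo hi (mult R v + \<alpha>2 v) v - lo v"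
      by (rule Lterm_pred_le)
    then have step: "Lterm lo hi (mult R v + \<alpha>2 v + -1) v \<le> Lterm lo hi (mult R v + \<alpha>2 v) v - lo v"
      by simp
    have \<alpha>1: "\<alpha>1 = (\<lambda>w. if w = v then -1 else 0)" and \<beta>1: "\<beta>1 = - lo v"
      using lower(2) by (simp_all add: lower_ineq_def)
    have "grid_Lsum R ?\<alpha> = grid_Lsum R \<alpha>2
        + (Lterm lo hi (mult R v + \<alpha>2 v + -1) v - Lterm lo hi (mult R v + \<alpha>2 v) v)"
      unfolding \<alpha>1 by (rule grid_Lsum_add_single[OF lower(1)])
    then have "grid_Lsum R ?\<alpha> \<le> \<beta>1 + \<beta>2" using R(2) step \<beta>1 by linarith
    with R(1) show ?thesis by blast
  qed
qed

lemma exists_copula_between_on_nodes: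
  assumes "\<forall>R. formal_union R \<longrightarrow> 0 \<le> Lfun lo hi R"
  shows "\<exists>C. copula C \<and> (\<forall>y\<in>nodes. lo y \<le> C y \<and> C y \<le> hi y)"
  using int_farkas[OF finite_nodes(2) finite_grid_system grid_system_vanishing]
proof
  assume "\<exists>b<0. ((\<lambda>v. 0), b) \<in> int_cone grid_system"
  then obtain \<beta> R where "\<beta> < 0" "set R \<subseteq> cells" "grid_Lsum R (\<lambda>v. 0) \<le> \<beta>"
    using int_cone_grid_system by blast
  moreover have "formal_union R"
    using \<open>set R \<subseteq> cells\<close> cell_is_rect by (auto simp: formal_union_def)
  then have "0 \<le> Lfun lo hi R" using assms by blast
  ultimately show ?thesis
    using Lfun_eq_grid_Lsum by fastforce
qed (use grid_system_solution_copula in blast)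

end

lemma finite_unit_set_partition:
  assumes "finite X" "{0, 1} \<subseteq> X" "X \<subseteq> {0..1}"
  shows "\<exists>a p. unit_partition a p \<and> X = a ` {..p}"
proof -
  obtain xs where xs: "sorted_wrt (<) xs" "set xs = X"
    using finite_set_strict_sorted[OF assms(1)] by blast
  define p where "p = length xs - 1"
  have len: "length xs = Suc p" using assms(2) xs(2) by (cases xs) (auto simp: p_def)
  have less: "xs ! i < xs ! j" if "i < j" "j \<le> p" for i j
    using sorted_wrt_nth_less[OF xs(1) that(1)] that len by simp
  have range: "xs ! i \<in> {0..1}" if "i \<le> p" for i
    using that len xs(2) assms(3) nth_mem[of i xs] by auto
  obtain k0 k1 where k: "k0 \<le> p" "xs ! k0 = 0" "k1 \<le> p" "xs ! k1 = 1"
    using assms(2) xs(2) len by (auto simp: in_set_conv_nth less_Suc_eq_le)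
  have "xs ! 0 = 0"
    using less[of 0 k0] range[of 0] k by (cases "k0 = 0") auto
  moreover have "xs ! p = 1"
    using less[of k1 p] range[of p] k by (cases "k1 = p") auto
  moreover have "X = (\<lambda>i. xs ! i) ` {..p}"
    using xs(2) len by (auto simp: set_conv_nth image_def less_Suc_eq_le)
  ultimately show ?thesis
    using less by (intro exI[of _ "\<lambda>i. xs ! i"] exI[of _ p]) (auto simp: unit_partition_def)
qed

lemma exists_copula_between_on_finite:
  assumes "grounded lo" "neutral1 lo" "grounded hi" "neutral1 hi"
    and "\<forall>y\<in>unit_sq. lo y \<le> hi y" and "\<forall>R. formal_union R \<longrightarrow> 0 \<le> Lfun lo hi R"
    and S: "finite S" "S \<subseteq> unit_sq"
  shows "\<exists>C. copula C \<and> (\<forall>y\<in>S. lo y \<le> C y \<and> C y \<le> hi y)"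
proof -
  define X where "X = insert 0 (insert 1 (fst ` S))"
  define Y where "Y = insert 0 (insert 1 (snd ` S))"
  have "finite X" "{0, 1} \<subseteq> X" "X \<subseteq> {0..1}" "finite Y" "{0, 1} \<subseteq> Y" "Y \<subseteq> {0..1}"
    using S by (auto simp: X_def Y_def unit_sq_def)
  then obtain a p b q where part_a: "unit_partition a p" "X = a ` {..p}"
      and part_b: "unit_partition b q" "Y = b ` {..q}"
    using finite_unit_set_partition by meson
  interpret copula_grid lo hi a p b q
    using assms part_a part_b by unfold_locales auto
  have "S \<subseteq> X \<times> Y"
    by (auto simp: X_def Y_def intro: rev_image_eqI)
  then have "S \<subseteq> nodes"
    unfolding nodes_def using part_a(2) part_b(2) by simp
  then show ?thesis
    using exists_copula_between_on_nodes assms(6) by blast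
qed

section \<open>Compactness\<close>

lemma copula_range:
  assumes "copula C" "y \<in> unit_sq"
  shows "C y \<in> {0..1}"
proof -
  obtain s t where y: "y = (s, t)" "s \<in> {0..1}" "t \<in> {0..1}"
    using assms(2) by (auto simp: unit_sq_def)
  have "C (s, 0) = 0" "C (0, t) = 0" "C (s, 1) = s" "C (1, t) = t" "C (0, 0) = 0" "C (0, 1) = 0"
    using assms(1) y by (auto simp: copula_def grounded_def neutral1_def)
  moreover have "0 \<le> Vol C (0, s, 0, t)" if "0 < s" "0 < t"
    using assms(1) that y by (auto simp: copula_def is_rect_def)
  moreover have "0 \<le> Vol C (0, s, t, 1)" if "0 < s" "t < 1"
    using assms(1) that y by (auto simp: copula_def is_rect_def)
  ultimately show ?thesis
    using y by (cases "s = 0 \<or> t = 0"; cases "s = 0 \<or> t = 1") (auto simp: Vol_def)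
qed

lemma copula_restrict_unit_sq:
  assumes "copula C"
  shows "copula (\<lambda>y. if y \<in> unit_sq then C y else 0)"
proof -
  have "Vol (\<lambda>y. if y \<in> unit_sq then C y else 0) r = Vol C r" if "is_rect r" for r
    using that by (cases r) (auto simp: Vol_def is_rect_def unit_sq_def)
  then show ?thesis
    using assms by (simp add: copula_def grounded_def neutral1_def unit_sq_def)
qed

text \<open>Functions \<open>pt \<Rightarrow> [0, 1]\<close> with the topology of pointwise convergence, which is
  compact by Tychonoff's theorem.\<close>
abbreviation unit_valued :: "(pt \<Rightarrow> real) topology" where
  "unit_valued \<equiv> product_topology (\<lambda>_. top_of_set {0..1}) UNIV"

lemma closedin_unit_valued_preimage:
  assumes "continuous_map unit_valued euclideanreal g" "closed T"
  shows "closedin unit_valued {f \<in> topspace unit_valued. g f \<in> T}"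
  using closedin_continuous_map_preimage[OF assms(1) closed_closedin[THEN iffD1, OF assms(2)]] .

lemma continuous_map_unit_valued_eval:
  "continuous_map unit_valued euclideanreal (\<lambda>f. f y)"
  by (rule continuous_map_into_fulltopology[OF continuous_map_product_projection[of y UNIV]]) simp

lemma closedin_Ball:
  assumes "\<And>i. i \<in> I \<Longrightarrow> closedin X {x \<in> topspace X. P i x}"
  shows "closedin X {x \<in> topspace X. \<forall>i\<in>I. P i x}"
proof (cases "I = {}")
  case False
  have "{x \<in> topspace X. \<forall>i\<in>I. P i x} = topspace X \<inter> (\<Inter>i\<in>I. {x \<in> topspace X. P i x})"
    by auto
  then show ?thesis
    using closedin_Int[OF closedin_topspace closedin_INT[OF False assms]] by simp
qed simp

lemma closedin_copulas: "closedin unit_valued {f \<in> topspace unit_valued. copula f}"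
proof -
  have eval: "closedin unit_valued {f \<in> topspace unit_valued. f y = c}" for y c
    using closedin_unit_valued_preimage[OF continuous_map_unit_valued_eval, of "{c}"] by simp
  have vol: "closedin unit_valued {f \<in> topspace unit_valued. 0 \<le> Vol f r}" for r
  proof (cases r)
    case (fields s1 s2 t1 t2)
    have "continuous_map unit_valued euclideanreal
        (\<lambda>f. f (s1, t1) + f (s2, t2) - f (s2, t1) - f (s1, t2))"
      by (intro continuous_map_add continuous_map_diff continuous_map_unit_valued_eval)
    from closedin_unit_valued_preimage[OF this, of "{0..}"] show ?thesis
      by (simp add: Vol_def fields)
  qed
  have "{f \<in> topspace unit_valued. copula f} =
      {f \<in> topspace unit_valued. \<forall>x\<in>{0..1}. f (x, 0) = 0}
      \<inter> {f \<in> topspace unit_valued. \<forall>x\<in>{0..1}. f (0, x) = 0}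
      \<inter> {f \<in> topspace unit_valued. \<forall>x\<in>{0..1}. f (x, 1) = x}
      \<inter> {f \<in> topspace unit_valued. \<forall>x\<in>{0..1}. f (1, x) = x}
      \<inter> {f \<in> topspace unit_valued. \<forall>r\<in>Collect is_rect. 0 \<le> Vol f r}"
    by (auto simp: copula_def grounded_def neutral1_def)
  also have "closedin unit_valued \<dots>"
    by (intro closedin_Int closedin_Ball eval vol)
  finally show ?thesis .
qed

text \<open>Compactness reduces the existence of a copula between the bounds to finitely many
  points.\<close>
lemma exists_copula_between:
  assumes "grounded lo" "neutral1 lo" "grounded hi" "neutral1 hi"
    and "\<forall>y\<in>unit_sq. lo y \<le> hi y" and "\<forall>R. formal_union R \<longrightarrow> 0 \<le> Lfun lo hi R"
  shows "\<exists>C. copula C \<and> (\<forall>y\<in>unit_sq. lo y \<le> C y \<and> C y \<le> hi y)"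
proof -
  define between where
    "between y = {f \<in> topspace unit_valued. copula f \<and> lo y \<le> f y \<and> f y \<le> hi y}" for y
  have closed: "closedin unit_valued (between y)" for y
  proof -
    have "between y = {f \<in> topspace unit_valued. copula f}
        \<inter> {f \<in> topspace unit_valued. f y \<in> {lo y..hi y}}"
      by (auto simp: between_def)
    moreover have "closedin unit_valued {f \<in> topspace unit_valued. f y \<in> {lo y..hi y}}"
      by (rule closedin_unit_valued_preimage[OF continuous_map_unit_valued_eval]) (rule closed_atLeastAtMost)
    ultimately show ?thesis
      using closedin_Int[OF closedin_copulas] by simp
  qed
  have "\<Inter> F \<noteq> {}" if F: "finite F" "F \<subseteq> between ` unit_sq" for F
  proof -
    obtain S where S: "S \<subseteq> unit_sq" "finite S" "F = between ` S"
      using F by (meson finite_subset_image)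
    obtain C where C: "copula C" "\<forall>y\<in>S. lo y \<le> C y \<and> C y \<le> hi y"
      using exists_copula_between_on_finite[OF assms S(2,1)] by blast
    let ?f = "\<lambda>y. if y \<in> unit_sq then C y else 0"
    have "?f \<in> topspace unit_valued"
      using copula_range[OF C(1)] by auto
    then have "?f \<in> between y" if "y \<in> S" for y
      using copula_restrict_unit_sq[OF C(1)] C(2) S(1) that by (auto simp: between_def)
    then show ?thesis using S(3) by blast
  qed
  moreover have "compact_space unit_valued"
    by (auto simp: compact_space_product_topology intro: compact_space_subtopology)
  ultimately have "\<Inter> (between ` unit_sq) \<noteq> {}"
    using closed by (auto simp: compact_space_fip)
  then obtain f where "\<forall>y\<in>unit_sq. f \<in> between y" by blast
  moreover have "(0, 0) \<in> unit_sq" by (simp add: unit_sq_def)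
  ultimately show ?thesis by (auto simp: between_def)
qed

section \<open>Copulas attaining the bounds\<close>

locale copula_bounds =
  fixes A B :: "pt \<Rightarrow> real"
  assumes A: "quasi_copula A" and B: "quasi_copula B"
    and A_le_B: "\<forall>y\<in>unit_sq. A y \<le> B y"
    and between_nonempty: "copulas_between A B \<noteq> {}"
begin

lemma copula_betweenD:
  assumes "C \<in> copulas_between A B"
  shows "\<forall>r. is_rect r \<longrightarrow> 0 \<le> Vol C r" "\<forall>y\<in>unit_sq. A y \<le> C y \<and> C y \<le> B y"
  using assms by (auto simp: copulas_between_def copula_def)

lemma Lfun_nonneg_between: "formal_union R \<Longrightarrow> 0 \<le> Lfun A B R"
  using between_nonempty Lfun_nonneg copula_betweenD by blast

lemma copula_between_le_P_O:
  assumes "C \<in> copulas_between A B" "formal_union R" "mult R x < 0"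
  shows "C x - A x \<le> Lfun A B R / of_int (- mult R x)"
proof -
  have "Lterm A B (mult R x) x - of_int (mult R x) * C x \<le> Lfun A B R"
    using Lterm_le_Lfun[OF assms(2) copula_betweenD[OF assms(1)]] .
  then show ?thesis
    using assms(3) by (simp add: Lterm_def field_simps)
qed

lemma copula_between_ge_P_M:
  assumes "C \<in> copulas_between A B" "formal_union R" "mult R x > 0"
  shows "B x - C x \<le> Lfun A B R / of_int (mult R x)"
proof -
  have "Lterm A B (mult R x) x - of_int (mult R x) * C x \<le> Lfun A B R"
    using Lterm_le_Lfun[OF assms(2) copula_betweenD[OF assms(1)]] .
  then show ?thesis
    using assms(3) by (simp add: Lterm_def field_simps)
qed

text \<open>Raising the lower bound at \<open>x\<close> to \<open>B x\<close> changes \<open>Lfun\<close> only on unions with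
  negative multiplicity at \<open>x\<close>, and there the bound by \<open>P_O\<close> keeps it nonnegative.\<close>
lemma copula_between_through_B:
  assumes x: "x \<in> unit_sq" and P_O: "ereal (B x - A x) \<le> P_O A B x"
  shows "\<exists>C\<in>copulas_between A B. C x = B x"
proof -
  have "0 \<le> Lfun (A(x := B x)) B R" if R: "formal_union R" for R
  proof (cases "mult R x < 0")
    case True
    have "P_O A B x \<le> ereal (Lfun A B R / of_int (- mult R x))"
      unfolding P_O_def using R True by (intro Inf_lower) auto
    with P_O have "ereal (B x - A x) \<le> ereal (Lfun A B R / of_int (- mult R x))"
      by (rule order_trans)
    then have "B x - A x \<le> Lfun A B R / of_int (- mult R x)" by simp
    with True show ?thesis by (simp add: Lfun_upd_lo field_simps)
  qed (use Lfun_nonneg_between[OF R] in \<open>simp add: Lfun_upd_lo\<close>)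
  moreover have "grounded (A(x := B x))" "neutral1 (A(x := B x))"
    using A B by (auto simp: quasi_copula_def grounded_def neutral1_def)
  moreover have "\<forall>y\<in>unit_sq. (A(x := B x)) y \<le> B y"
    using A_le_B by simp
  ultimately obtain C where C: "copula C" "\<forall>y\<in>unit_sq. (A(x := B x)) y \<le> C y \<and> C y \<le> B y"
    using exists_copula_between[of "A(x := B x)" B] B by (auto simp: quasi_copula_def)
  have "A y \<le> C y \<and> C y \<le> B y" if "y \<in> unit_sq" for y
  proof (cases "y = x")
    case True
    then show ?thesis using C(2) A_le_B that by (metis fun_upd_same order_trans)
  qed (use C(2)[rule_format, OF that] in simp)
  moreover have "C x = B x" using C(2) x by (metis fun_upd_same order_antisym)
  ultimately show ?thesis using C(1) by (auto simp: copulas_between_def)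
qed

lemma copula_between_through_A:
  assumes x: "x \<in> unit_sq" and P_M: "ereal (B x - A x) \<le> P_M A B x"
  shows "\<exists>C\<in>copulas_between A B. C x = A x"
proof -
  have "0 \<le> Lfun A (B(x := A x)) R" if R: "formal_union R" for R
  proof (cases "mult R x > 0")
    case True
    have "P_M A B x \<le> ereal (Lfun A B R / of_int (mult R x))"
      unfolding P_M_def using R True by (intro Inf_lower) auto
    with P_M have "ereal (B x - A x) \<le> ereal (Lfun A B R / of_int (mult R x))"
      by (rule order_trans)
    then have "B x - A x \<le> Lfun A B R / of_int (mult R x)" by simp
    with True show ?thesis by (simp add: Lfun_upd_hi field_simps)
  qed (use Lfun_nonneg_between[OF R] in \<open>simp add: Lfun_upd_hi\<close>)
  moreover have "grounded (B(x := A x))" "neutral1 (B(x := A x))"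
    using A B by (auto simp: quasi_copula_def grounded_def neutral1_def)
  moreover have "\<forall>y\<in>unit_sq. A y \<le> (B(x := A x)) y"
    using A_le_B by simp
  ultimately obtain C where C: "copula C" "\<forall>y\<in>unit_sq. A y \<le> C y \<and> C y \<le> (B(x := A x)) y"
    using exists_copula_between[of A "B(x := A x)"] A by (auto simp: quasi_copula_def)
  have "A y \<le> C y \<and> C y \<le> B y" if "y \<in> unit_sq" for y
  proof (cases "y = x")
    case True
    then show ?thesis using C(2) A_le_B that by (metis fun_upd_same order_trans)
  qed (use C(2)[rule_format, OF that] in simp)
  moreover have "C x = A x" using C(2) x by (metis fun_upd_same order_antisym)
  ultimately show ?thesis using C(1) by (auto simp: copulas_between_def)
qed

lemma B_eq_SUP_iff:
  assumes x: "x \<in> unit_sq"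
  shows "B x = (SUP C\<in>copulas_between A B. C x) \<longleftrightarrow> ereal (B x - A x) \<le> P_O A B x"
proof
  assume B_eq: "B x = (SUP C\<in>copulas_between A B. C x)"
  show "ereal (B x - A x) \<le> P_O A B x"
    unfolding P_O_def
  proof (rule Inf_greatest, clarify)
    fix R assume R: "formal_union R" "mult R x < 0"
    have "(SUP C\<in>copulas_between A B. C x) \<le> A x + Lfun A B R / of_int (- mult R x)"
      using between_nonempty copula_between_le_P_O[OF _ R] by (intro cSUP_least) force+
    with B_eq show "ereal (B x - A x) \<le> ereal (Lfun A B R / of_int (- mult R x))" by simp
  qed
next
  assume "ereal (B x - A x) \<le> P_O A B x"
  then obtain C where C: "C \<in> copulas_between A B" "C x = B x"
    using copula_between_through_B[OF x] by blast
  have "bdd_above ((\<lambda>C. C x) ` copulas_between A B)"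
    using x by (intro bdd_aboveI[of _ "B x"]) (auto simp: copulas_between_def)
  then have "B x \<le> (SUP C\<in>copulas_between A B. C x)"
    using C cSUP_upper by metis
  moreover have "(SUP C\<in>copulas_between A B. C x) \<le> B x"
    using between_nonempty x by (intro cSUP_least) (auto simp: copulas_between_def)
  ultimately show "B x = (SUP C\<in>copulas_between A B. C x)" by simp
qed

lemma A_eq_INF_iff:
  assumes x: "x \<in> unit_sq"
  shows "A x = (INF C\<in>copulas_between A B. C x) \<longleftrightarrow> ereal (B x - A x) \<le> P_M A B x"
proof
  assume A_eq: "A x = (INF C\<in>copulas_between A B. C x)"
  show "ereal (B x - A x) \<le> P_M A B x"
    unfolding P_M_def
  proof (rule Inf_greatest, clarify)
    fix R assume R: "formal_union R" "mult R x > 0"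
    have "B x - Lfun A B R / of_int (mult R x) \<le> (INF C\<in>copulas_between A B. C x)"
      using between_nonempty copula_between_ge_P_M[OF _ R] by (intro cINF_greatest) force+
    with A_eq show "ereal (B x - A x) \<le> ereal (Lfun A B R / of_int (mult R x))" by simp
  qed
next
  assume "ereal (B x - A x) \<le> P_M A B x"
  then obtain C where C: "C \<in> copulas_between A B" "C x = A x"
    using copula_between_through_A[OF x] by blast
  have "bdd_below ((\<lambda>C. C x) ` copulas_between A B)"
    using x by (intro bdd_belowI[of _ "A x"]) (auto simp: copulas_between_def)
  then have "(INF C\<in>copulas_between A B. C x) \<le> A x"
    using C cINF_lower by metis
  moreover have "A x \<le> (INF C\<in>copulas_between A B. C x)"
    using between_nonempty x by (intro cINF_greatest) (auto simp: copulas_between_def)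
  ultimately show "A x = (INF C\<in>copulas_between A B. C x)" by simp
qed

end

theorem mainTheorem18:
  fixes A B :: "real \<times> real \<Rightarrow> real"
  assumes "quasi_copula A" and "quasi_copula B"
    and "\<forall>x\<in>unit_sq. A x \<le> B x"
    and "copulas_between A B \<noteq> {}"
  shows "((\<forall>x\<in>unit_sq. B x = (SUP C\<in>copulas_between A B. C x)) \<longleftrightarrow>
           (\<forall>x\<in>unit_sq. ereal (B x - A x) \<le> P_O A B x))
       \<and> ((\<forall>x\<in>unit_sq. A x = (INF C\<in>copulas_between A B. C x)) \<longleftrightarrow>
           (\<forall>x\<in>unit_sq. ereal (B x - A x) \<le> P_M A B x))"
proof -
  interpret copula_bounds A B
    using assms by unfold_locales
  show ?thesis
    using B_eq_SUP_iff A_eq_INF_iff by auto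
qed

end
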